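(* Let $\Omega\subset\mathbb{R}^2$, integers $N,M\ge 1$, a node deployment $\mathbf{P}=(p_1,\dots,p_{N+M})$, a cell partitioning $\mathbf{W}=(W_1,\dots,W_N)$ of $\Omega$ and a normalized flow matrix $\mathbf{S}$ be as described in the context, with flows $F_{i,j}=F_{i,j}(\mathbf{W},\mathbf{S})$ and AP power coefficients $g_n(\mathbf{P},\mathbf{S})$. Then $$\sum_{n=1}^{N}g_n(\mathbf{P},\mathbf{S})\,R_b\int_{W_n}f(\omega)\,d\omega=\sum_{i=1}^{N}\Big[\sum_{j=1}^{N+M}\beta_{i,j}\|p_i-p_j\|^2F_{i,j}(\mathbf{W},\mathbf{S})+\sum_{j=1}^{N}\rho_jF_{i,j}(\mathbf{W},\mathbf{S})\Big].$$
   Context: Let $\Omega\subset\mathbb{R}^2$ be a convex polygon (including its interior). Let $N,M\ge1$ be integers; $\mathcal{I_A}=\{1,\dots,N\}$ indexes access points (APs) and $\mathcal{I_F}=\{N+1,\dots,N+M\}$ indexes fusion centers (FCs). A node deployment is $\mathbf{P}=(p_1,\dots,p_{N+M})$ with $p_n\in\Omega$. Let $f:\Omega\to\mathbb{R}^+$ be continuous and differentiable and let $R_b>0$ be a constant. A cell partitioning $\mathbf{W}=(W_1,\dots,W_N)$ is a partition of $\Omega$ into Borel sets; write $v(W_n)=\int_{W_n}f(\omega)d\omega$. A normalized flow matrix $\mathbf{S}=[s_{i,j}]$, $i\in\mathcal{I_A}$, $j\in\mathcal{I_A}\cup\mathcal{I_F}$, satisfies $s_{i,j}\in[0,1]$,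 $\sum_{j=1}^{N+M}s_{i,j}=1$ for every $i\in\mathcal{I_A}$, and has no cycles: whenever $l_0,\dots,l_K$ satisfy $\prod_{k=1}^K s_{l_{k-1},l_k}>0$ then $s_{l_K,l_0}=0$ (in particular $s_{i,i}=0$). The flows $F_{i,j}(\mathbf{W},\mathbf{S})$ ($i\in\mathcal{I_A}$, $j\in\mathcal{I_A}\cup\mathcal{I_F}$) are the unique numbers with $F_{i,j}=s_{i,j}F_i$, where $F_i=\sum_{j=1}^{N+M}F_{i,j}$ satisfies $F_i=R_b v(W_i)+\sum_{j=1}^N F_{j,i}$. Positive constants $\eta_n$ ($n\in\mathcal{I_A}$), $\beta_{i,j}$ ($i\in\mathcal{I_A}$, $j\in\mathcal{I_A}\cup\mathcal{I_F}$) and nonnegative constants $\rho_n$ ($n\in\mathcal{I_A}$) are given. AP power coefficient: for $n\in\mathcal{I_A}$, consider all directed paths $L: n=l_0\to l_1\to\cdots\to l_J$ with $l_0,\dots,l_{J-1}\in\mathcal{I_A}$, $l_J\in\mathcal{I_F}$ and $\prod_{i=1}^J s_{l_{i-1},l_i}>0$; then $$g_n(\mathbf{P},\mathbf{S})=\sum_{L}\Big[\prod_{i=1}^{J}s_{l_{i-1},l_i}\Big(\sum_{j=1}^{J}\beta_{l_{j-1},l_j}\|p_{l_{j-1}}-p_{l_j}\|^2+\sum_{j=1}^{J-1}\rho_{l_j}\Big)\Big].$$ *)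

theory Defs
  imports "HOL-Analysis.Analysis"
begin

definition convex_polygon :: "(real^2) set \<Rightarrow> bool" where
  "convex_polygon \<Omega> \<longleftrightarrow> (\<exists>V. finite V \<and> \<Omega> = convex hull V \<and> interior \<Omega> \<noteq> {})"

definition cell_partition :: "nat \<Rightarrow> (real^2) set \<Rightarrow> (nat \<Rightarrow> (real^2) set) \<Rightarrow> bool" where
  "cell_partition N \<Omega> W \<longleftrightarrow>
     (\<forall>n\<in>{1..N}. W n \<in> sets borel) \<and>
     (\<forall>m\<in>{1..N}. \<forall>n\<in>{1..N}. m \<noteq> n \<longrightarrow> W m \<inter> W n = {}) \<and>
     (\<Union>n\<in>{1..N}. W n) = \<Omega>"

definition path_prod :: "(nat \<Rightarrow> nat \<Rightarrow> real) \<Rightarrow> nat list \<Rightarrow> real" where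
  "path_prod s l = (\<Prod>k\<in>{1..<length l}. s (l ! (k - 1)) (l ! k))"

text \<open>Normalized flow matrix: APs are 1..N, FCs are N+1..N+M.\<close>
definition normalized_flow_matrix :: "nat \<Rightarrow> nat \<Rightarrow> (nat \<Rightarrow> nat \<Rightarrow> real) \<Rightarrow> bool" where
  "normalized_flow_matrix N M s \<longleftrightarrow>
     (\<forall>i\<in>{1..N}. \<forall>j\<in>{1..N+M}. 0 \<le> s i j \<and> s i j \<le> 1) \<and>
     (\<forall>i\<in>{1..N}. (\<Sum>j=1..N+M. s i j) = 1) \<and>
     (\<forall>l. 2 \<le> length l \<and> set l \<subseteq> {1..N} \<and> path_prod s l > 0 \<longrightarrow> s (last l) (hd l) = 0)"

definition AP_FC_paths :: "nat \<Rightarrow> nat \<Rightarrow> (nat \<Rightarrow> nat \<Rightarrow> real) \<Rightarrow> nat \<Rightarrow> nat list set" where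
  "AP_FC_paths N M s n = {l. 2 \<le> length l \<and> hd l = n \<and>
       (\<forall>k < length l - 1. l ! k \<in> {1..N}) \<and> last l \<in> {N+1..N+M} \<and> path_prod s l > 0}"

definition power_coeff ::
  "nat \<Rightarrow> nat \<Rightarrow> (nat \<Rightarrow> nat \<Rightarrow> real) \<Rightarrow> (nat \<Rightarrow> nat \<Rightarrow> real) \<Rightarrow> (nat \<Rightarrow> real)
    \<Rightarrow> (nat \<Rightarrow> real^2) \<Rightarrow> nat \<Rightarrow> real" where
  "power_coeff N M s \<beta> \<rho> p n =
     (\<Sum>l\<in>AP_FC_paths N M s n.
        path_prod s l *
        ((\<Sum>j=1..length l - 1. \<beta> (l ! (j - 1)) (l ! j) * (norm (p (l ! (j - 1)) - p (l ! j)))\<^sup>2)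
         + (\<Sum>j=1..length l - 2. \<rho> (l ! j))))"

end

theory Submission
  imports Defs
begin

text \<open>Splitting every AP-to-FC path after its first hop yields the recursion
  g_n = \<Sum>_k s_{n,k} \<beta>_{n,k} |p_n - p_k|^2 + \<Sum>_{k AP} s_{n,k} (\<rho>_k + g_k);
  for this one needs that the path products out of every AP sum to 1, which follows from the
  row sums of S by the same splitting and a well-founded induction: the no-cycle condition
  makes the graph of positive AP-to-AP flows acyclic. Multiplying the recursion by the
  outflow F_n and using F_{n,k} = s_{n,k} F_n, the terms \<Sum>_{n,k} F_{n,k} g_k cancel exactly
  against the inflow part of F_n = R_b v(W_n) + \<Sum>_j F_{j,n}.\<close>

lemma path_prod_singleton [simp]: "path_prod s [a] = 1"
  by (simp add: path_prod_def)

lemma path_prod_Cons_Cons: "path_prod s (a # b # l) = s a b * path_prod s (b # l)"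
  unfolding path_prod_def
  by (simp add: prod.atLeast_Suc_lessThan prod.atLeast_Suc_lessThan_Suc_shift del: prod.op_ivl_Suc)

lemma sum_adjacent_pairs_Cons:
  fixes c :: "'b \<Rightarrow> 'b \<Rightarrow> 'a::comm_monoid_add"
  shows "(\<Sum>j=1..length (a#b#r) - 1. c ((a#b#r)!(j-1)) ((a#b#r)!j))
    = c a b + (\<Sum>j=1..length (b#r) - 1. c ((b#r)!(j-1)) ((b#r)!j))"
  by (simp add: sum.atLeast_Suc_atMost sum.atLeast_Suc_atMost_Suc_shift del: sum.cl_ivl_Suc)

lemma sum_interior_nodes_Cons:
  fixes \<rho> :: "'b \<Rightarrow> 'a::comm_monoid_add"
  assumes "r \<noteq> []"
  shows "(\<Sum>j=1..length (a#b#r) - 2. \<rho> ((a#b#r)!j)) = \<rho> b + (\<Sum>j=1..length (b#r) - 2. \<rho> ((b#r)!j))"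
  using assms
  by (cases r)
    (simp_all add: sum.atLeast_Suc_atMost sum.atLeast_Suc_atMost_Suc_shift del: sum.cl_ivl_Suc)

lemma sum_filter_pos_weights:
  fixes a g :: "'a \<Rightarrow> real"
  assumes "finite A" and "\<And>k. k \<in> A \<Longrightarrow> 0 \<le> a k"
  shows "(\<Sum>k\<in>{k\<in>A. 0 < a k}. a k * g k) = (\<Sum>k\<in>A. a k * g k)"
proof -
  have "a k * g k = (if 0 < a k then a k * g k else 0)" if "k \<in> A" for k
    using assms(2)[OF that] by auto
  then show ?thesis
    by (simp add: sum.inter_filter[OF assms(1)])
qed

definition path_cost ::
  "(nat \<Rightarrow> nat \<Rightarrow> real) \<Rightarrow> (nat \<Rightarrow> real) \<Rightarrow> (nat \<Rightarrow> real^2) \<Rightarrow> nat list \<Rightarrow> real" where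
  "path_cost \<beta> \<rho> p l =
     (\<Sum>j=1..length l - 1. \<beta> (l ! (j - 1)) (l ! j) * (norm (p (l ! (j - 1)) - p (l ! j)))\<^sup>2)
     + (\<Sum>j=1..length l - 2. \<rho> (l ! j))"

lemma power_coeff_eq_sum_path_cost:
  "power_coeff N M s \<beta> \<rho> p n = (\<Sum>l\<in>AP_FC_paths N M s n. path_prod s l * path_cost \<beta> \<rho> p l)"
  by (simp add: power_coeff_def path_cost_def)

lemma path_cost_pair: "path_cost \<beta> \<rho> p [a, b] = \<beta> a b * (norm (p a - p b))\<^sup>2"
  by (simp add: path_cost_def)

lemma path_cost_Cons_Cons:
  assumes "r \<noteq> []"
  shows "path_cost \<beta> \<rho> p (a # b # r) =
    \<beta> a b * (norm (p a - p b))\<^sup>2 + \<rho> b + path_cost \<beta> \<rho> p (b # r)"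
  using sum_adjacent_pairs_Cons[of "\<lambda>x y. \<beta> x y * (norm (p x - p y))\<^sup>2" a b r]
    sum_interior_nodes_Cons[OF assms, of \<rho> a b]
  by (simp add: path_cost_def)

lemma AP_FC_paths_ConsE:
  assumes "l \<in> AP_FC_paths N M s n"
  obtains b r where "l = n # b # r"
  using assms unfolding AP_FC_paths_def
  by (cases l; cases "tl l") auto

lemma pair_in_AP_FC_paths_iff:
  "[a, b] \<in> AP_FC_paths N M s n \<longleftrightarrow> a = n \<and> a \<in> {1..N} \<and> b \<in> {N+1..N+M} \<and> 0 < s a b"
  by (auto simp: AP_FC_paths_def path_prod_Cons_Cons)

definition AP_flow_graph :: "nat \<Rightarrow> (nat \<Rightarrow> nat \<Rightarrow> real) \<Rightarrow> nat rel" where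
  "AP_flow_graph N s = {(i, j). i \<in> {1..N} \<and> j \<in> {1..N} \<and> 0 < s i j}"

context
  fixes N M :: nat and s :: "nat \<Rightarrow> nat \<Rightarrow> real"
  assumes nfm: "normalized_flow_matrix N M s"
begin

lemma flow_nonneg: "i \<in> {1..N} \<Longrightarrow> j \<in> {1..N+M} \<Longrightarrow> 0 \<le> s i j"
  using nfm unfolding normalized_flow_matrix_def by blast

lemma flow_row_sum: "i \<in> {1..N} \<Longrightarrow> (\<Sum>j=1..N+M. s i j) = 1"
  using nfm unfolding normalized_flow_matrix_def by blast

lemma Cons_in_AP_FC_paths_iff:
  assumes "2 \<le> length l"
  shows "a # l \<in> AP_FC_paths N M s n \<longleftrightarrow>
    a = n \<and> a \<in> {1..N} \<and> 0 < s a (hd l) \<and> l \<in> AP_FC_paths N M s (hd l)"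
proof -
  obtain b c r where l: "l = b # c # r" using assms by (cases l; cases "tl l") auto
  have "0 < s a b * path_prod s l \<longleftrightarrow> 0 < s a b \<and> 0 < path_prod s l"
    if "a \<in> {1..N}" "b \<in> {1..N}"
    using flow_nonneg[of a b] that by (auto simp: zero_less_mult_iff)
  then show ?thesis
    using l by (auto simp: AP_FC_paths_def path_prod_Cons_Cons All_less_Suc2)
qed

lemma trancl_AP_flow_graph_imp_path:
  assumes "(x, y) \<in> (AP_flow_graph N s)\<^sup>+"
  shows "\<exists>l. 2 \<le> length l \<and> set l \<subseteq> {1..N} \<and> hd l = x \<and> last l = y \<and> 0 < path_prod s l"
  using assms
proof (induction rule: converse_trancl_induct)
  case (base u)
  then show ?case
    by (intro exI[of _ "[u, y]"]) (auto simp: AP_flow_graph_def path_prod_Cons_Cons)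
next
  case (step u z)
  then obtain l where l: "2 \<le> length l" "set l \<subseteq> {1..N}" "hd l = z" "last l = y" "0 < path_prod s l"
    by blast
  then obtain r where "l = z # r" "r \<noteq> []" by (cases l) force+
  with step(1) l show ?case
    by (intro exI[of _ "u # l"]) (auto simp: AP_flow_graph_def path_prod_Cons_Cons)
qed

lemma trancl_AP_flow_graph_no_back_edge:
  assumes "(x, y) \<in> (AP_flow_graph N s)\<^sup>+"
  shows "(y, x) \<notin> AP_flow_graph N s"
proof -
  obtain l where "2 \<le> length l" "set l \<subseteq> {1..N}" "hd l = x" "last l = y" "0 < path_prod s l"
    using trancl_AP_flow_graph_imp_path[OF assms] by blast
  with nfm have "s y x = 0"
    unfolding normalized_flow_matrix_def by blast
  then show ?thesis by (simp add: AP_flow_graph_def)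
qed

lemma acyclic_AP_flow_graph: "acyclic (AP_flow_graph N s)"
  unfolding acyclic_def
proof
  fix x
  show "(x, x) \<notin> (AP_flow_graph N s)\<^sup>+"
  proof
    assume xx: "(x, x) \<in> (AP_flow_graph N s)\<^sup>+"
    then show False
      by (rule tranclE) (use trancl_AP_flow_graph_no_back_edge xx in blast)+
  qed
qed

lemma wf_converse_AP_flow_graph: "wf ((AP_flow_graph N s)\<inverse>)"
proof (rule finite_acyclic_wf_converse)
  show "finite (AP_flow_graph N s)"
    by (rule finite_subset[of _ "{1..N} \<times> {1..N}"]) (auto simp: AP_flow_graph_def)
qed (rule acyclic_AP_flow_graph)

lemma AP_FC_paths_unfold:
  assumes "n \<in> {1..N}"
  shows "AP_FC_paths N M s n = (\<lambda>k. [n, k]) ` {k \<in> {N+1..N+M}. 0 < s n k}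
     \<union> (\<Union>k\<in>{k \<in> {1..N}. 0 < s n k}. Cons n ` AP_FC_paths N M s k)"
proof (intro set_eqI iffI)
  fix l
  assume l: "l \<in> AP_FC_paths N M s n"
  then obtain b r where lbr: "l = n # b # r" by (rule AP_FC_paths_ConsE)
  show "l \<in> (\<lambda>k. [n, k]) ` {k \<in> {N+1..N+M}. 0 < s n k}
     \<union> (\<Union>k\<in>{k \<in> {1..N}. 0 < s n k}. Cons n ` AP_FC_paths N M s k)"
  proof (cases "r = []")
    case True
    with l lbr show ?thesis by (auto simp: pair_in_AP_FC_paths_iff)
  next
    case False
    then have "2 \<le> length (b # r)" by (cases r) auto
    with l lbr have "0 < s n b" and "b # r \<in> AP_FC_paths N M s b"
      by (simp_all add: Cons_in_AP_FC_paths_iff)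
    moreover have "b \<in> {1..N}"
      using l lbr False unfolding AP_FC_paths_def by force
    ultimately show ?thesis using lbr by blast
  qed
next
  fix l
  assume "l \<in> (\<lambda>k. [n, k]) ` {k \<in> {N+1..N+M}. 0 < s n k}
     \<union> (\<Union>k\<in>{k \<in> {1..N}. 0 < s n k}. Cons n ` AP_FC_paths N M s k)"
  then consider (pair) k where "k \<in> {N+1..N+M}" "0 < s n k" "l = [n, k]"
    | (cons) k l' where "k \<in> {1..N}" "0 < s n k" "l' \<in> AP_FC_paths N M s k" "l = n # l'"
    by blast
  then show "l \<in> AP_FC_paths N M s n"
  proof cases
    case pair
    with assms show ?thesis by (simp add: pair_in_AP_FC_paths_iff)
  next
    case cons
    then have "2 \<le> length l'" "hd l' = k" by (simp_all add: AP_FC_paths_def)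
    with cons assms show ?thesis by (simp add: Cons_in_AP_FC_paths_iff)
  qed
qed

lemma finite_AP_FC_paths_step:
  assumes "n \<in> {1..N}"
    and "\<And>k. k \<in> {1..N} \<Longrightarrow> 0 < s n k \<Longrightarrow> finite (AP_FC_paths N M s k)"
  shows "finite (AP_FC_paths N M s n)"
  using assms(2) unfolding AP_FC_paths_unfold[OF assms(1)] by auto

lemma sum_AP_FC_paths_unfold:
  fixes \<phi> :: "nat list \<Rightarrow> real"
  assumes n: "n \<in> {1..N}"
    and fin: "\<And>k. k \<in> {1..N} \<Longrightarrow> 0 < s n k \<Longrightarrow> finite (AP_FC_paths N M s k)"
  shows "(\<Sum>l\<in>AP_FC_paths N M s n. path_prod s l * \<phi> l) =
    (\<Sum>k=N+1..N+M. s n k * \<phi> [n, k])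
    + (\<Sum>k=1..N. s n k * (\<Sum>l\<in>AP_FC_paths N M s k. path_prod s l * \<phi> (n # l)))"
proof -
  let ?P = "AP_FC_paths N M s"
  let ?h = "\<lambda>l. path_prod s l * \<phi> l"
  let ?FC = "{k \<in> {N+1..N+M}. 0 < s n k}" and ?AP = "{k \<in> {1..N}. 0 < s n k}"
  have disjoint: "(\<lambda>k. [n, k]) ` ?FC \<inter> (\<Union>k\<in>?AP. Cons n ` ?P k) = {}"
    by (auto elim: AP_FC_paths_ConsE)
  have "sum ?h (?P n) = sum ?h ((\<lambda>k. [n, k]) ` ?FC) + sum ?h (\<Union>k\<in>?AP. Cons n ` ?P k)"
    unfolding AP_FC_paths_unfold[OF n] using fin disjoint by (simp add: sum.union_disjoint)
  also have "sum ?h ((\<lambda>k. [n, k]) ` ?FC) = (\<Sum>k\<in>?FC. s n k * \<phi> [n, k])"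
    by (simp add: sum.reindex inj_on_def path_prod_Cons_Cons)
  also have "sum ?h (\<Union>k\<in>?AP. Cons n ` ?P k) = (\<Sum>k\<in>?AP. sum ?h (Cons n ` ?P k))"
    using fin by (intro sum.UNION_disjoint) (auto elim: AP_FC_paths_ConsE)
  also have "\<dots> = (\<Sum>k\<in>?AP. s n k * (\<Sum>l\<in>?P k. path_prod s l * \<phi> (n # l)))"
  proof (rule sum.cong)
    fix k
    have "path_prod s (n # l) = s n k * path_prod s l" if "l \<in> ?P k" for l
      using that by (auto elim: AP_FC_paths_ConsE simp: path_prod_Cons_Cons)
    then show "sum ?h (Cons n ` ?P k) = s n k * (\<Sum>l\<in>?P k. path_prod s l * \<phi> (n # l))"
      by (simp add: sum.reindex sum_distrib_left mult.assoc)
  qed simp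
  also have "(\<Sum>k\<in>?FC. s n k * \<phi> [n, k]) = (\<Sum>k=N+1..N+M. s n k * \<phi> [n, k])"
    using n by (intro sum_filter_pos_weights) (auto intro: flow_nonneg)
  also have "(\<Sum>k\<in>?AP. s n k * (\<Sum>l\<in>?P k. path_prod s l * \<phi> (n # l))) =
      (\<Sum>k=1..N. s n k * (\<Sum>l\<in>?P k. path_prod s l * \<phi> (n # l)))"
    using n by (intro sum_filter_pos_weights) (auto intro: flow_nonneg)
  finally show ?thesis .
qed

lemma AP_FC_paths_finite_sum_path_prod:
  "n \<in> {1..N} \<Longrightarrow>
    finite (AP_FC_paths N M s n) \<and> (\<Sum>l\<in>AP_FC_paths N M s n. path_prod s l) = 1"
proof (induction n rule: wf_induct_rule[OF wf_converse_AP_flow_graph])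
  case (1 n)
  then have IH: "finite (AP_FC_paths N M s k) \<and> (\<Sum>l\<in>AP_FC_paths N M s k. path_prod s l) = 1"
    if "k \<in> {1..N}" "0 < s n k" for k
    using that by (auto simp: AP_flow_graph_def)
  then have fin: "\<And>k. k \<in> {1..N} \<Longrightarrow> 0 < s n k \<Longrightarrow> finite (AP_FC_paths N M s k)"
    by blast
  have weights: "s n k * (\<Sum>l\<in>AP_FC_paths N M s k. path_prod s l * 1) = s n k" if "k \<in> {1..N}" for k
  proof (cases "0 < s n k")
    case False
    with flow_nonneg[OF 1(2), of k] that show ?thesis by simp
  qed (use IH that in simp)
  have "(\<Sum>l\<in>AP_FC_paths N M s n. path_prod s l * 1) =
      (\<Sum>k=N+1..N+M. s n k * 1) + (\<Sum>k=1..N. s n k * (\<Sum>l\<in>AP_FC_paths N M s k. path_prod s l * 1))"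
    by (rule sum_AP_FC_paths_unfold[OF 1(2) fin])
  also have "(\<Sum>k=1..N. s n k * (\<Sum>l\<in>AP_FC_paths N M s k. path_prod s l * 1)) = (\<Sum>k=1..N. s n k)"
    by (rule sum.cong[OF refl weights]) simp
  also have "(\<Sum>k=N+1..N+M. s n k * 1) + (\<Sum>k=1..N. s n k) = 1"
    using flow_row_sum[OF 1(2)] sum.ub_add_nat[of 1 N "s n" M] by simp
  finally show ?case
    using finite_AP_FC_paths_step[OF 1(2) fin] by simp
qed

lemma finite_AP_FC_paths: "n \<in> {1..N} \<Longrightarrow> finite (AP_FC_paths N M s n)"
  using AP_FC_paths_finite_sum_path_prod by blast

lemma sum_path_prod_AP_FC_paths: "n \<in> {1..N} \<Longrightarrow> (\<Sum>l\<in>AP_FC_paths N M s n. path_prod s l) = 1"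
  using AP_FC_paths_finite_sum_path_prod by blast

lemma power_coeff_recursion:
  assumes n: "n \<in> {1..N}"
  shows "power_coeff N M s \<beta> \<rho> p n =
    (\<Sum>k=1..N+M. s n k * (\<beta> n k * (norm (p n - p k))\<^sup>2))
    + (\<Sum>k=1..N. s n k * (\<rho> k + power_coeff N M s \<beta> \<rho> p k))"
proof -
  let ?P = "AP_FC_paths N M s" and ?g = "power_coeff N M s \<beta> \<rho> p"
  let ?c = "\<lambda>k. \<beta> n k * (norm (p n - p k))\<^sup>2"
  have extend: "(\<Sum>l\<in>?P k. path_prod s l * path_cost \<beta> \<rho> p (n # l)) = ?c k + \<rho> k + ?g k"
    if k: "k \<in> {1..N}" for k
  proof -
    have "(\<Sum>l\<in>?P k. path_prod s l * path_cost \<beta> \<rho> p (n # l)) =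
        (\<Sum>l\<in>?P k. (?c k + \<rho> k) * path_prod s l + path_prod s l * path_cost \<beta> \<rho> p l)"
      by (rule sum.cong) (auto elim!: AP_FC_paths_ConsE simp: path_cost_Cons_Cons algebra_simps)
    also have "\<dots> = ?c k + \<rho> k + ?g k"
      using sum_path_prod_AP_FC_paths[OF k]
      by (simp add: sum.distrib power_coeff_eq_sum_path_cost flip: sum_distrib_left)
    finally show ?thesis .
  qed
  have "?g n = (\<Sum>l\<in>?P n. path_prod s l * path_cost \<beta> \<rho> p l)"
    by (rule power_coeff_eq_sum_path_cost)
  also have "\<dots> = (\<Sum>k=N+1..N+M. s n k * path_cost \<beta> \<rho> p [n, k])
      + (\<Sum>k=1..N. s n k * (\<Sum>l\<in>?P k. path_prod s l * path_cost \<beta> \<rho> p (n # l)))"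
    using n finite_AP_FC_paths by (intro sum_AP_FC_paths_unfold)
  also have "\<dots> = (\<Sum>k=1..N. s n k * ?c k) + (\<Sum>k=N+1..N+M. s n k * ?c k)
      + (\<Sum>k=1..N. s n k * (\<rho> k + ?g k))"
    by (simp add: path_cost_pair extend distrib_left sum.distrib)
  also have "\<dots> = (\<Sum>k=1..N+M. s n k * ?c k) + (\<Sum>k=1..N. s n k * (\<rho> k + ?g k))"
    using sum.ub_add_nat[of 1 N "\<lambda>k. s n k * ?c k" M] by simp
  finally show ?thesis .
qed

end

lemma weighted_flow_identity:
  fixes g a \<rho> :: "nat \<Rightarrow> real" and c s F :: "nat \<Rightarrow> nat \<Rightarrow> real"
  assumes rec: "\<forall>n\<in>{1..N}. g n = (\<Sum>k=1..N+M. s n k * c n k) + (\<Sum>k=1..N. s n k * (\<rho> k + g k))"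
    and flow_split: "\<forall>i\<in>{1..N}. \<forall>j\<in>{1..N+M}. F i j = s i j * (\<Sum>k=1..N+M. F i k)"
    and flow_balance: "\<forall>i\<in>{1..N}. (\<Sum>k=1..N+M. F i k) = a i + (\<Sum>j=1..N. F j i)"
  shows "(\<Sum>n=1..N. g n * a n) =
    (\<Sum>i=1..N. (\<Sum>j=1..N+M. c i j * F i j) + (\<Sum>j=1..N. \<rho> j * F i j))"
proof -
  let ?out = "\<lambda>i. \<Sum>k=1..N+M. F i k"
  have outflow: "g n * ?out n =
      (\<Sum>k=1..N+M. c n k * F n k) + (\<Sum>k=1..N. \<rho> k * F n k) + (\<Sum>k=1..N. F n k * g k)"
    if n: "n \<in> {1..N}" for n
  proof -
    have F: "F n k = s n k * ?out n" if "k \<in> {1..N+M}" for k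
      using flow_split n that by blast
    have "g n * ?out n =
        (\<Sum>k=1..N+M. s n k * c n k * ?out n) + (\<Sum>k=1..N. s n k * (\<rho> k + g k) * ?out n)"
      unfolding rec[rule_format, OF n] distrib_right sum_distrib_right ..
    also have "\<dots> = (\<Sum>k=1..N+M. c n k * F n k) + (\<Sum>k=1..N. (\<rho> k + g k) * F n k)"
      using F by (intro arg_cong2[where f = "(+)"] sum.cong) auto
    finally show ?thesis
      by (simp add: sum.distrib algebra_simps)
  qed
  have "(\<Sum>n=1..N. g n * a n) = (\<Sum>n=1..N. g n * ?out n - (\<Sum>j=1..N. F j n * g n))"
    using flow_balance by (simp add: algebra_simps sum_distrib_left)
  also have "\<dots> = (\<Sum>n=1..N. (\<Sum>k=1..N+M. c n k * F n k) + (\<Sum>k=1..N. \<rho> k * F n k))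
      + (\<Sum>n=1..N. \<Sum>k=1..N. F n k * g k) - (\<Sum>n=1..N. \<Sum>j=1..N. F j n * g n)"
    using outflow by (simp add: sum_subtractf sum.distrib)
  also have "(\<Sum>n=1..N. \<Sum>k=1..N. F n k * g k) = (\<Sum>n=1..N. \<Sum>j=1..N. F j n * g n)"
    by (rule sum.swap)
  finally show ?thesis by simp
qed

theorem lemma1:
  fixes N M :: nat and \<Omega> :: "(real^2) set" and f :: "real^2 \<Rightarrow> real" and R_b :: real
    and p :: "nat \<Rightarrow> real^2" and W :: "nat \<Rightarrow> (real^2) set"
    and s F \<beta> :: "nat \<Rightarrow> nat \<Rightarrow> real" and \<rho> :: "nat \<Rightarrow> real"
  assumes "convex_polygon \<Omega>"
    and "1 \<le> N" and "1 \<le> M"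
    and "\<forall>n\<in>{1..N+M}. p n \<in> \<Omega>"
    and "continuous_on \<Omega> f" and "f differentiable_on \<Omega>" and "\<forall>x\<in>\<Omega>. f x > 0"
    and "R_b > 0"
    and "cell_partition N \<Omega> W"
    and "normalized_flow_matrix N M s"
    and "\<forall>i\<in>{1..N}. \<forall>j\<in>{1..N+M}. \<beta> i j > 0"
    and "\<forall>n\<in>{1..N}. \<rho> n \<ge> 0"
    and flow1: "\<forall>i\<in>{1..N}. \<forall>j\<in>{1..N+M}. F i j = s i j * (\<Sum>k=1..N+M. F i k)"
    and flow2: "\<forall>i\<in>{1..N}. (\<Sum>k=1..N+M. F i k) = R_b * integral (W i) f + (\<Sum>j=1..N. F j i)"
  shows "(\<Sum>n=1..N. power_coeff N M s \<beta> \<rho> p n * (R_b * integral (W n) f)) =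
         (\<Sum>i=1..N. (\<Sum>j=1..N+M. \<beta> i j * (norm (p i - p j))\<^sup>2 * F i j)
                   + (\<Sum>j=1..N. \<rho> j * F i j))"
proof -
  have "\<forall>n\<in>{1..N}. power_coeff N M s \<beta> \<rho> p n =
      (\<Sum>k=1..N+M. s n k * (\<beta> n k * (norm (p n - p k))\<^sup>2))
      + (\<Sum>k=1..N. s n k * (\<rho> k + power_coeff N M s \<beta> \<rho> p k))"
    using power_coeff_recursion[OF \<open>normalized_flow_matrix N M s\<close>] by blast
  from weighted_flow_identity[OF this flow1 flow2] show ?thesis .
qed

end
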